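(* Let $V$ be a smooth manifold carrying two structures of a finite-dimensional real vector space (compatible with its smooth structure), with scalar multiplications $h^1_t$ and $h^2_t$, $t\ge 0$. If the homotheties commute, $h^1_t\circ h^2_s=h^2_s\circ h^1_t$ for all $s,t\ge 0$, then the two vector space structures coincide. *)

theory Defs
  imports "HOL-Analysis.Analysis"
begin

text \<open>C-infinity maps between finite-dimensional real normed spaces: f is
  (Frechet) differentiable everywhere and every directional derivative
  x \<mapsto> Df(x)v is again smooth (greatest fixed point = all iterated
  derivatives exist).\<close>
coinductive smooth_map :: "('a::real_normed_vector \<Rightarrow> 'b::real_normed_vector) \<Rightarrow> bool" where
  "(\<forall>x. f differentiable (at x)) \<Longrightarrow>
   (\<forall>v. smooth_map (\<lambda>x. frechet_derivative f (at x) v)) \<Longrightarrow> smooth_map f"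

text \<open>A second vector space structure on V = 'a, transported from 'b along a
  bijection phi (phi is then a linear isomorphism for this structure).\<close>
definition vs2_add :: "('a \<Rightarrow> 'b::real_vector) \<Rightarrow> 'a \<Rightarrow> 'a \<Rightarrow> 'a" where
  "vs2_add \<phi> x y = inv \<phi> (\<phi> x + \<phi> y)"

definition vs2_scale :: "('a \<Rightarrow> 'b::real_vector) \<Rightarrow> real \<Rightarrow> 'a \<Rightarrow> 'a" where
  "vs2_scale \<phi> t x = inv \<phi> (t *\<^sub>R \<phi> x)"

end

theory Submission
  imports Defs
begin

text \<open>Write \<open>\<psi>\<close> for the inverse of \<open>\<phi>\<close>. The commutation hypothesis reads
  \<open>t \<psi>(s \<phi> x) = \<psi>(s \<phi>(t x))\<close>; differentiating in \<open>s\<close> at \<open>s = 0\<close> gives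
  \<open>t L(\<phi> x) = L(\<phi>(t x))\<close> for the derivative \<open>L\<close> of \<open>\<psi>\<close> at the origin. Since \<open>L\<close> is
  injective (the chain rule makes it a right inverse of the derivative of \<open>\<phi>\<close>),
  \<open>\<phi>\<close> is positively homogeneous. A positively homogeneous map that is
  differentiable at the origin coincides with its derivative there, so \<open>\<phi>\<close> is linear
  and the transported structure is the given one.\<close>

lemma smooth_map_differentiable: "smooth_map f \<Longrightarrow> f differentiable (at x)"
  by (erule smooth_map.cases) auto

lemma has_vector_derivative_along_ray:
  fixes g :: "'a::real_normed_vector \<Rightarrow> 'b::real_normed_vector"
  assumes "(g has_derivative D) (at 0)"
  shows "((\<lambda>s. g (s *\<^sub>R y)) has_vector_derivative D y) (at 0 within S)"
proof -
  have "((\<lambda>s. s *\<^sub>R y) has_derivative (\<lambda>s. s *\<^sub>R y)) (at 0 within S)"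
    by (intro derivative_eq_intros) auto
  from has_derivative_compose[OF this] assms
  have "((\<lambda>s. g (s *\<^sub>R y)) has_derivative (\<lambda>s. D (s *\<^sub>R y))) (at 0 within S)"
    by simp
  moreover have "D (s *\<^sub>R y) = s *\<^sub>R D y" for s
    using has_derivative_linear[OF assms] by (rule linear_scale)
  ultimately show ?thesis
    by (simp add: has_vector_derivative_def)
qed

lemma derivative_along_ray_unique:
  fixes g :: "'a::real_normed_vector \<Rightarrow> 'b::real_normed_vector"
  assumes "(g has_derivative D) (at 0)"
    and "(h has_vector_derivative c) (at 0 within {0..})"
    and "\<And>s. s \<ge> 0 \<Longrightarrow> g (s *\<^sub>R y) = h s"
  shows "D y = c"
proof (rule vector_derivative_unique_within)
  show "at (0::real) within {0..} \<noteq> bot"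
    by (simp add: at_within_Ici_at_right)
  show "((\<lambda>s. g (s *\<^sub>R y)) has_vector_derivative D y) (at 0 within {0..})"
    using assms(1) by (rule has_vector_derivative_along_ray)
  show "((\<lambda>s. g (s *\<^sub>R y)) has_vector_derivative c) (at 0 within {0..})"
    by (rule has_vector_derivative_transform[OF _ _ assms(2)]) (auto simp: assms(3))
qed

lemma positively_homogeneous_eq_derivative:
  fixes f :: "'a::real_normed_vector \<Rightarrow> 'b::real_normed_vector"
  assumes "(f has_derivative D) (at 0)"
    and "\<And>t x. t \<ge> 0 \<Longrightarrow> f (t *\<^sub>R x) = t *\<^sub>R f x"
  shows "f = D"
proof
  fix x
  have "((\<lambda>s. s *\<^sub>R f x) has_vector_derivative f x) (at 0 within {0..})"
    by (intro derivative_eq_intros) auto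
  then have "D x = f x"
    by (rule derivative_along_ray_unique[OF assms(1)]) (simp add: assms(2))
  then show "f x = D x" ..
qed

lemma inj_derivative_of_right_inverse:
  fixes \<psi> :: "'a::real_normed_vector \<Rightarrow> 'b::real_normed_vector"
  assumes "(\<psi> has_derivative L) (at a)"
    and "(\<phi> has_derivative M) (at (\<psi> a))"
    and "\<And>z. \<phi> (\<psi> z) = z"
  shows "inj L"
proof -
  have "((\<lambda>z. \<phi> (\<psi> z)) has_derivative (\<lambda>v. M (L v))) (at a)"
    using assms(1,2) by (rule has_derivative_compose)
  then have "((\<lambda>z. z) has_derivative (\<lambda>v. M (L v))) (at a)"
    by (simp add: assms(3))
  then have "(\<lambda>v. M (L v)) = (\<lambda>v. v)"
    using has_derivative_ident has_derivative_unique by blast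
  then show ?thesis
    by (metis injI)
qed

lemma scaled_ray_eq_if_inj_derivative:
  fixes g :: "'a::real_normed_vector \<Rightarrow> 'b::real_normed_vector"
  assumes "(g has_derivative L) (at 0)"
    and "inj L"
    and "\<And>s. s \<ge> 0 \<Longrightarrow> t *\<^sub>R g (s *\<^sub>R u) = g (s *\<^sub>R v)"
  shows "v = t *\<^sub>R u"
proof -
  have "((\<lambda>s. g (s *\<^sub>R u)) has_vector_derivative L u) (at 0 within {0..})"
    using assms(1) by (rule has_vector_derivative_along_ray)
  then have "((\<lambda>s. t *\<^sub>R g (s *\<^sub>R u)) has_vector_derivative t *\<^sub>R L u) (at 0 within {0..})"
    by (rule bounded_linear.has_vector_derivative[OF bounded_linear_scaleR_right])
  then have "L v = t *\<^sub>R L u"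
    by (rule derivative_along_ray_unique[OF assms(1)]) (simp add: assms(3))
  also have "\<dots> = L (t *\<^sub>R u)"
    using has_derivative_linear[OF assms(1)] by (simp add: linear_scale)
  finally show ?thesis
    using assms(2) by (simp add: inj_eq)
qed

lemma vs2_add_linear: "inj \<phi> \<Longrightarrow> linear \<phi> \<Longrightarrow> vs2_add \<phi> x y = x + y"
  by (simp add: vs2_add_def linear_add[symmetric])

lemma vs2_scale_linear: "inj \<phi> \<Longrightarrow> linear \<phi> \<Longrightarrow> vs2_scale \<phi> t x = t *\<^sub>R x"
  by (simp add: vs2_scale_def linear_scale[symmetric])

theorem proposition2:
  fixes \<phi> :: "'a::euclidean_space \<Rightarrow> 'b::euclidean_space"
  assumes "bij \<phi>"
    and "smooth_map \<phi>"
    and "smooth_map (inv \<phi>)"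
    and "\<And>s t x. s \<ge> 0 \<Longrightarrow> t \<ge> 0 \<Longrightarrow>
           t *\<^sub>R vs2_scale \<phi> s x = vs2_scale \<phi> s (t *\<^sub>R x)"
  shows "(\<forall>x y. vs2_add \<phi> x y = x + y) \<and> (\<forall>t x. vs2_scale \<phi> t x = t *\<^sub>R x)"
proof -
  have inv_right: "\<phi> (inv \<phi> z) = z" for z
    using assms(1) by (simp add: bij_is_surj surj_f_inv_f)
  have inv_zero: "inv \<phi> 0 = 0"
    using assms(4)[of 0 0 0] by (simp add: vs2_scale_def)
  obtain L where L: "(inv \<phi> has_derivative L) (at 0)"
    using smooth_map_differentiable[OF assms(3)] by (auto simp: differentiable_def)
  obtain M where M: "(\<phi> has_derivative M) (at 0)"
    using smooth_map_differentiable[OF assms(2)] by (auto simp: differentiable_def)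
  have "inj L"
    using M by (intro inj_derivative_of_right_inverse[OF L _ inv_right]) (simp add: inv_zero)
  have "\<phi> (t *\<^sub>R x) = t *\<^sub>R \<phi> x" if "t \<ge> 0" for t x
  proof (rule scaled_ray_eq_if_inj_derivative[OF L \<open>inj L\<close>])
    show "t *\<^sub>R inv \<phi> (s *\<^sub>R \<phi> x) = inv \<phi> (s *\<^sub>R \<phi> (t *\<^sub>R x))" if "s \<ge> 0" for s
      using assms(4)[OF that \<open>t \<ge> 0\<close>, of x] by (simp add: vs2_scale_def)
  qed
  then have "\<phi> = M"
    by (rule positively_homogeneous_eq_derivative[OF M])
  then have "linear \<phi>"
    using M has_derivative_linear by blast
  with assms(1) show ?thesis
    by (simp add: bij_is_inj vs2_add_linear vs2_scale_linear)
qed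

end
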